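(* In the setting of Generalized Rejection Sampling (i.i.d. $X^{(1)},\dots,X^{(M)}\sim\bar p$, rewards $R_i=r(X^{(i)})$, empirical reward CDF $\hat F_R$), assume the law of $r(X^{(1)})$ is continuous with CDF $F$, fix $1\le K\le M$, and use the acceptance function $A(r,\hat F_R,x,\hat P_X)=1$ if $\hat F_R(r)>1-K/M$ and $0$ otherwise (so exactly the $K$ samples with the largest rewards are accepted, almost surely). Then the conditional law of $X^{(1)}$ given that it is accepted is proportional to $\exp(\hat r(x)/\alpha)\,\bar p(dx)$, i.e. it solves $\operatorname{argmax}_{\hat p}[\mathbb{E}_{\hat p}\hat r-\alpha\mathsf{KL}(\hat p\|\bar p)]$, where $$\frac{\hat r(x)}{\alpha}=\log\Big[\sum_{k=0}^{K-1}\binom{M-1}{k}F(r(x))^{M-k-1}\big(1-F(r(x))\big)^{k}\Big].$$ In particular, for $M=2,K=1$ (preference rewards) $\hat r(x)/\alpha=\log F(r(x))$, and for $K=M$, $\hat r\equiv 0$.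
   Context: $\bar p$ is a probability measure on a measurable space $\mathcal{X}$, $r:\mathcal{X}\to\mathbb{R}$ measurable, $\alpha>0$. $\hat F_R(u)=\frac1M\#\{i:R_i\le u\}$. Sample $X^{(i)}$ is accepted iff $A(R_i,\hat F_R(R_i),X^{(i)},\hat P_X)=1$. *)

theory Defs
  imports "HOL-Probability.Probability"
begin

definition reward_cdf :: "'a measure \<Rightarrow> ('a \<Rightarrow> real) \<Rightarrow> real \<Rightarrow> real" where
  "reward_cdf pbar r t = measure pbar {x \<in> space pbar. r x \<le> t}"

definition emp_cdf :: "nat \<Rightarrow> (nat \<Rightarrow> 'w \<Rightarrow> 'a) \<Rightarrow> ('a \<Rightarrow> real) \<Rightarrow> 'w \<Rightarrow> real \<Rightarrow> real" where
  "emp_cdf M X r w u = real (card {i. i < M \<and> r (X i w) \<le> u}) / real M"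

definition accepted :: "nat \<Rightarrow> nat \<Rightarrow> (nat \<Rightarrow> 'w \<Rightarrow> 'a) \<Rightarrow> ('a \<Rightarrow> real) \<Rightarrow> nat \<Rightarrow> 'w \<Rightarrow> bool" where
  "accepted M K X r i w \<longleftrightarrow> emp_cdf M X r w (r (X i w)) > 1 - real K / real M"

definition rhat :: "real \<Rightarrow> nat \<Rightarrow> nat \<Rightarrow> (real \<Rightarrow> real) \<Rightarrow> ('a \<Rightarrow> real) \<Rightarrow> 'a \<Rightarrow> real" where
  "rhat \<alpha> M K F r x = \<alpha> * ln (\<Sum>k<K. real ((M - 1) choose k) * F (r x) ^ (M - k - 1) * (1 - F (r x)) ^ k)"

end

theory Submission
  imports Defs
begin

(* By independence the joint law of the samples is a product measure, so one can fix X 0 = x and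
   integrate over the other samples first. Sample 0 is accepted iff fewer than K of the other
   M - 1 rewards exceed r x; given x these are independent events of probability 1 - F (r x), so
     P(X 0 \<in> A, accepted) = \<integral>\<^sub>A accept_prob M K (F (r x)) dpbar
   exactly, ties included. Moreover exp (rhat x / \<alpha>) = accept_prob M K (F (r x)) wherever the
   right-hand side is positive, which holds almost surely because F(R) > 0 a.s. for every real
   random variable R. *)

lemma (in prob_space) integral_pos_AE:
  fixes f :: "'a \<Rightarrow> real"
  assumes "integrable M f" "AE x in M. 0 < f x"
  shows "0 < (\<integral>x. f x \<partial>M)"
proof -
  have nonneg: "AE x in M. 0 \<le> f x" using assms(2) by eventually_elim simp
  have "(\<integral>x. f x \<partial>M) \<noteq> 0"
  proof
    assume "(\<integral>x. f x \<partial>M) = 0"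
    then have "AE x in M. f x = 0" using integral_nonneg_eq_0_iff_AE[OF assms(1) nonneg] by simp
    with assms(2) have "AE x in M. False" by eventually_elim simp
    then show False by simp
  qed
  moreover have "0 \<le> (\<integral>x. f x \<partial>M)" using nonneg by (rule integral_nonneg_AE)
  ultimately show ?thesis by simp
qed

lemma distr_iid_eq_PiM:
  assumes "prob_space Pr" "I \<noteq> {}"
    and "\<forall>i\<in>I. X i \<in> measurable Pr N" and "\<forall>i\<in>I. distr Pr N (X i) = N"
    and "prob_space.indep_vars Pr (\<lambda>_. N) X I"
  shows "distr Pr (PiM I (\<lambda>_. N)) (\<lambda>w. \<lambda>i\<in>I. X i w) = PiM I (\<lambda>_. N)"
proof -
  interpret prob_space Pr by fact
  have "distr Pr (PiM I (\<lambda>_. N)) (\<lambda>w. \<lambda>i\<in>I. X i w) = PiM I (\<lambda>i. distr Pr N (X i))"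
    by (rule indep_vars_iff_distr_eq_PiM'[OF assms(2), THEN iffD1]) (use assms in auto)
  also have "\<dots> = PiM I (\<lambda>_. N)"
    using assms by (intro PiM_cong) auto
  finally show ?thesis .
qed

lemma pred_card_less:
  assumes "finite J" and [measurable]: "\<And>j. j \<in> J \<Longrightarrow> Measurable.pred M (\<lambda>\<omega>. P \<omega> j)"
  shows "Measurable.pred M (\<lambda>\<omega>. card {j \<in> J. P \<omega> j} < K)"
proof -
  have "card {j \<in> J. P \<omega> j} < K \<longleftrightarrow> (\<Sum>j\<in>J. if P \<omega> j then 1 else 0 :: real) < real K" for \<omega>
    using \<open>finite J\<close> by (simp add: sum.If_cases Int_def)
  then show ?thesis by (simp only:) measurable
qed

lemma (in real_distribution) bdd_above_cdf_eq_0: "bdd_above {x. cdf M x = 0}"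
proof (rule ccontr)
  assume unbounded: "\<not> bdd_above {x. cdf M x = 0}"
  have "cdf M = (\<lambda>_. 0)"
  proof
    fix t
    obtain z where "cdf M z = 0" "t < z" using unbounded unfolding bdd_above_def by (auto simp: not_le)
    then show "cdf M t = 0" using cdf_nondecreasing[of t z] cdf_nonneg[of t] by simp
  qed
  then show False using cdf_lim_at_top_prob tendsto_const_iff[of "at_top :: real filter" "0::real" 1] by simp
qed

lemma (in real_distribution) AE_cdf_pos: "AE x in M. 0 < cdf M x"
proof -
  let ?Z = "{x. cdf M x = 0}"
  have Z_down: "cdf M x = 0" if "x \<le> z" "z \<in> ?Z" for x z
    using cdf_nondecreasing[OF that(1)] cdf_nonneg[of x] that(2) by simp
  show ?thesis
  proof (cases "?Z = {}")
    case True
    then show ?thesis using cdf_nonneg by (intro AE_I2) (auto simp: less_le)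
  next
    case False
    have "bdd_above ?Z" by (rule bdd_above_cdf_eq_0)
    define s where "s = Sup ?Z"
    (* The zero set of cdf M is {..<s} or {..s}; the measure of {..<s} is the left limit of
       cdf M at s, hence 0. *)
    have "eventually (\<lambda>x. cdf M x = 0) (at_left s)"
    proof (rule eventually_at_leftI)
      fix x assume "x \<in> {s - 1<..<s}"
      then obtain z where "z \<in> ?Z" "x < z" using less_cSup_iff[OF False \<open>bdd_above ?Z\<close>] by (auto simp: s_def)
      then show "cdf M x = 0" using Z_down[of x z] by simp
    qed simp
    then have "measure M {..<s} = 0"
      using tendsto_unique[OF _ cdf_at_left[of s] tendsto_eventually] by simp
    have Z_le: "?Z \<subseteq> {..s}" using cSup_upper[OF _ \<open>bdd_above ?Z\<close>] by (auto simp: s_def)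
    have not_pos: "{x \<in> space M. \<not> 0 < cdf M x} = ?Z" using cdf_nonneg by (auto simp: less_le)
    show ?thesis
    proof (cases "cdf M s = 0")
      case True
      then have "{..s} \<in> null_sets M" by (simp add: null_sets_def emeasure_eq_measure cdf_def)
      then show ?thesis using Z_le not_pos by (intro AE_I') auto
    next
      case False
      then have "?Z \<subseteq> {..<s}" using Z_le by (auto simp: less_le)
      moreover have "{..<s} \<in> null_sets M" using \<open>measure M {..<s} = 0\<close> by (simp add: null_sets_def emeasure_eq_measure)
      ultimately show ?thesis using not_pos by (intro AE_I') auto
    qed
  qed
qed

section \<open>Binomial counts under product measures\<close>

lemma emeasure_PiM_PiE_in_or_out:
  fixes N :: "'a measure"
  assumes "prob_space N" "finite J" "D \<in> sets N" "S \<subseteq> J"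
  shows "emeasure (PiM J (\<lambda>_. N)) (PiE J (\<lambda>i. if i \<in> S then D else space N - D))
    = ennreal (measure N D ^ card S * (1 - measure N D) ^ (card J - card S))"
proof -
  interpret N: prob_space N by fact
  interpret product_prob_space "\<lambda>_. N" by unfold_locales
  let ?p = "measure N D"
  have "emeasure (PiM J (\<lambda>_. N)) (PiE J (\<lambda>i. if i \<in> S then D else space N - D))
      = (\<Prod>i\<in>J. emeasure N (if i \<in> S then D else space N - D))"
    using assms by (intro emeasure_PiM) auto
  also have "\<dots> = (\<Prod>i\<in>J. ennreal (if i \<in> S then ?p else 1 - ?p))"
    using assms by (intro prod.cong) (auto simp: N.emeasure_eq_measure N.prob_compl)
  also have "\<dots> = ennreal (\<Prod>i\<in>J. if i \<in> S then ?p else 1 - ?p)"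
    by (intro prod_ennreal) auto
  also have "(\<Prod>i\<in>J. if i \<in> S then ?p else 1 - ?p) = (\<Prod>i\<in>J \<inter> S. ?p) * (\<Prod>i\<in>J - S. 1 - ?p)"
    using prod.If_cases[OF \<open>finite J\<close>, of "\<lambda>i. i \<in> S" "\<lambda>_. ?p" "\<lambda>_. 1 - ?p"] by (simp add: Diff_eq)
  also have "\<dots> = ?p ^ card S * (1 - ?p) ^ (card J - card S)"
    using assms by (simp add: Int_absorb1 card_Diff_subset finite_subset)
  finally show ?thesis .
qed

lemma count_less_eq_UN_PiE:
  assumes "D \<subseteq> space N"
  shows "{\<omega> \<in> space (PiM J (\<lambda>_. N)). card {i \<in> J. \<omega> i \<in> D} < K}
    = (\<Union>S\<in>{S. S \<subseteq> J \<and> card S < K}. PiE J (\<lambda>i. if i \<in> S then D else space N - D))"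
proof (intro equalityI subsetI)
  fix \<omega> assume \<omega>: "\<omega> \<in> {\<omega> \<in> space (PiM J (\<lambda>_. N)). card {i \<in> J. \<omega> i \<in> D} < K}"
  then have "\<omega> \<in> PiE J (\<lambda>i. if i \<in> {i \<in> J. \<omega> i \<in> D} then D else space N - D)"
    by (auto simp: space_PiM PiE_iff)
  moreover have "{i \<in> J. \<omega> i \<in> D} \<in> {S. S \<subseteq> J \<and> card S < K}" using \<omega> by auto
  ultimately show "\<omega> \<in> (\<Union>S\<in>{S. S \<subseteq> J \<and> card S < K}. PiE J (\<lambda>i. if i \<in> S then D else space N - D))"
    by (rule UN_I[rotated])
next
  fix \<omega> assume "\<omega> \<in> (\<Union>S\<in>{S. S \<subseteq> J \<and> card S < K}. PiE J (\<lambda>i. if i \<in> S then D else space N - D))"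
  then obtain S where S: "S \<subseteq> J" "card S < K" "\<omega> \<in> PiE J (\<lambda>i. if i \<in> S then D else space N - D)"
    by blast
  then have "{i \<in> J. \<omega> i \<in> D} = S" by (auto simp: PiE_iff split: if_splits)
  moreover have "\<omega> \<in> space (PiM J (\<lambda>_. N))"
    using S assms by (auto simp: space_PiM PiE_iff split: if_splits)
  ultimately show "\<omega> \<in> {\<omega> \<in> space (PiM J (\<lambda>_. N)). card {i \<in> J. \<omega> i \<in> D} < K}"
    using S(2) by auto
qed

lemma emeasure_PiM_count_less:
  fixes N :: "'a measure"
  assumes N: "prob_space N" and J: "finite J" and D: "D \<in> sets N"
  shows "emeasure (PiM J (\<lambda>_. N)) {\<omega> \<in> space (PiM J (\<lambda>_. N)). card {i \<in> J. \<omega> i \<in> D} < K}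
    = ennreal (\<Sum>k<K. real (card J choose k) * measure N D ^ k * (1 - measure N D) ^ (card J - k))"
proof -
  interpret N: prob_space N by fact
  let ?P = "PiM J (\<lambda>_. N)" and ?p = "measure N D"
  define box where "box S = PiE J (\<lambda>i. if i \<in> S then D else space N - D)" for S
  define SS where "SS = {S. S \<subseteq> J \<and> card S < K}"
  have "finite SS" unfolding SS_def using J by auto
  have "{\<omega> \<in> space ?P. card {i \<in> J. \<omega> i \<in> D} < K} = (\<Union>S\<in>SS. box S)"
    unfolding box_def SS_def using sets.sets_into_space[OF D] by (rule count_less_eq_UN_PiE)
  moreover have "disjoint_family_on box SS"
    unfolding disjoint_family_on_def
  proof (intro ballI impI)
    fix S T assume "S \<in> SS" "T \<in> SS" "S \<noteq> T"
    then obtain i where "i \<in> J" "(i \<in> S) \<noteq> (i \<in> T)" unfolding SS_def by blast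
    then show "box S \<inter> box T = {}" unfolding box_def by (auto simp: PiE_iff) (metis Diff_iff)+
  qed
  moreover have "box S \<in> sets ?P" for S
    unfolding box_def using D by (intro sets_PiM_I_finite J) auto
  ultimately have "emeasure ?P {\<omega> \<in> space ?P. card {i \<in> J. \<omega> i \<in> D} < K}
      = (\<Sum>S\<in>SS. emeasure ?P (box S))"
    using \<open>finite SS\<close> by (simp add: sum_emeasure image_subset_iff)
  also have "\<dots> = (\<Sum>S\<in>SS. ennreal (?p ^ card S * (1 - ?p) ^ (card J - card S)))"
    unfolding box_def SS_def using emeasure_PiM_PiE_in_or_out[OF N J D] by (intro sum.cong) auto
  also have "\<dots> = ennreal (\<Sum>S\<in>SS. ?p ^ card S * (1 - ?p) ^ (card J - card S))"
    by (intro sum_ennreal) auto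
  also have "(\<Sum>S\<in>SS. ?p ^ card S * (1 - ?p) ^ (card J - card S))
      = (\<Sum>k<K. \<Sum>S\<in>{S \<in> SS. card S = k}. ?p ^ card S * (1 - ?p) ^ (card J - card S))"
    using \<open>finite SS\<close> by (intro sum.group[symmetric]) (auto simp: SS_def)
  also have "\<dots> = (\<Sum>k<K. real (card J choose k) * ?p ^ k * (1 - ?p) ^ (card J - k))"
  proof (rule sum.cong[OF refl])
    fix k assume "k \<in> {..<K}"
    then have "{S \<in> SS. card S = k} = {S. S \<subseteq> J \<and> card S = k}" by (auto simp: SS_def)
    then show "(\<Sum>S\<in>{S \<in> SS. card S = k}. ?p ^ card S * (1 - ?p) ^ (card J - card S))
        = real (card J choose k) * ?p ^ k * (1 - ?p) ^ (card J - k)"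
      using n_subsets[OF J, of k] by simp
  qed
  finally show ?thesis .
qed

lemma reward_cdf_eq_cdf_distr: "r \<in> borel_measurable N \<Longrightarrow> reward_cdf N r = cdf (distr N borel r)"
  by (auto simp: fun_eq_iff reward_cdf_def cdf_def measure_distr vimage_def Int_def conj_commute)

lemma AE_reward_cdf_pos:
  assumes "prob_space N" and r: "r \<in> borel_measurable N"
  shows "AE x in N. 0 < reward_cdf N r (r x)"
proof -
  let ?R = "distr N borel r"
  interpret R: real_distribution ?R using assms by (simp add: prob_space.real_distribution_distr)
  have "cdf ?R \<in> borel_measurable borel"
    by (intro borel_measurable_mono monoI R.cdf_nondecreasing)
  then have "{t \<in> space borel. 0 < cdf ?R t} \<in> sets borel" by measurable
  then show ?thesis
    using R.AE_cdf_pos AE_distr_iff[OF r] reward_cdf_eq_cdf_distr[OF r] by simp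
qed

lemma borel_measurable_reward_cdf:
  assumes "finite_measure N" and [measurable]: "r \<in> borel_measurable N"
  shows "reward_cdf N r \<in> borel_measurable borel"
  unfolding reward_cdf_def using assms(1)
  by (intro borel_measurable_mono monoI finite_measure.finite_measure_mono) auto

lemma emeasure_PiM_fewer_above_level:
  fixes N :: "'a measure" and r :: "'a \<Rightarrow> real"
  assumes N: "prob_space N" and r[measurable]: "r \<in> borel_measurable N" and J: "finite J"
  shows "emeasure (PiM J (\<lambda>_. N)) {\<omega> \<in> space (PiM J (\<lambda>_. N)). card {j \<in> J. r x < r (\<omega> j)} < K}
    = ennreal (\<Sum>k<K. real (card J choose k) * reward_cdf N r (r x) ^ (card J - k)
        * (1 - reward_cdf N r (r x)) ^ k)"
proof -
  interpret N: prob_space N by fact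
  let ?P = "PiM J (\<lambda>_. N)"
  define D where "D = {y \<in> space N. r x < r y}"
  have "D \<in> sets N" unfolding D_def by measurable
  have "D = space N - {y \<in> space N. r y \<le> r x}" unfolding D_def by auto
  then have D_prob: "measure N D = 1 - reward_cdf N r (r x)"
    unfolding reward_cdf_def by (simp add: N.prob_compl)
  have "{j \<in> J. \<omega> j \<in> D} = {j \<in> J. r x < r (\<omega> j)}" if "\<omega> \<in> space ?P" for \<omega>
    using that unfolding D_def by (auto simp: space_PiM PiE_iff)
  then have "{\<omega> \<in> space ?P. card {j \<in> J. r x < r (\<omega> j)} < K} = {\<omega> \<in> space ?P. card {j \<in> J. \<omega> j \<in> D} < K}"
    by auto
  then show ?thesis
    using emeasure_PiM_count_less[OF N J \<open>D \<in> sets N\<close>, of K] D_prob by (simp add: mult_ac)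
qed

lemma emeasure_PiM_fewer_above:
  fixes N :: "'a measure" and r :: "'a \<Rightarrow> real"
  assumes N: "prob_space N" and r[measurable]: "r \<in> borel_measurable N"
    and J: "finite J" "i \<notin> J" and A[measurable]: "A \<in> sets N"
  shows "emeasure (PiM (insert i J) (\<lambda>_. N))
      {\<omega> \<in> space (PiM (insert i J) (\<lambda>_. N)). \<omega> i \<in> A \<and> card {j \<in> J. r (\<omega> i) < r (\<omega> j)} < K}
    = (\<integral>\<^sup>+x\<in>A. ennreal (\<Sum>k<K. real (card J choose k)
        * reward_cdf N r (r x) ^ (card J - k) * (1 - reward_cdf N r (r x)) ^ k) \<partial>N)"
proof -
  interpret N: prob_space N by fact
  interpret product_prob_space "\<lambda>_. N" by unfold_locales
  let ?P = "PiM J (\<lambda>_. N)" and ?F = "reward_cdf N r"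
  define E where "E = {\<omega> \<in> space (PiM (insert i J) (\<lambda>_. N)). \<omega> i \<in> A \<and> card {j \<in> J. r (\<omega> i) < r (\<omega> j)} < K}"
  define C where "C x = {\<omega> \<in> space ?P. card {j \<in> J. r x < r (\<omega> j)} < K}" for x
  have [measurable]: "Measurable.pred (PiM (insert i J) (\<lambda>_. N)) (\<lambda>\<omega>. card {j \<in> J. r (\<omega> i) < r (\<omega> j)} < K)"
    by (intro pred_card_less J) measurable
  have [measurable]: "E \<in> sets (PiM (insert i J) (\<lambda>_. N))"
    unfolding E_def by measurable
  have C_sets: "C x \<in> sets ?P" for x
    unfolding C_def by (intro predE pred_card_less J) measurable
  have "emeasure (PiM (insert i J) (\<lambda>_. N)) E = (\<integral>\<^sup>+\<omega>. indicator E \<omega> \<partial>PiM (insert i J) (\<lambda>_. N))"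
    by simp
  also have "\<dots> = (\<integral>\<^sup>+x. (\<integral>\<^sup>+y. indicator E (y(i := x)) \<partial>PiM J (\<lambda>_. N)) \<partial>N)"
    using J by (intro product_nn_integral_insert_rev) auto
  also have "\<dots> = (\<integral>\<^sup>+x. indicator A x * emeasure ?P (C x) \<partial>N)"
  proof (rule nn_integral_cong)
    fix x assume x: "x \<in> space N"
    have "indicator E (y(i := x)) = (indicator A x * indicator (C x) y :: ennreal)" if "y \<in> space ?P" for y
    proof -
      have "{j \<in> J. r ((y(i := x)) i) < r ((y(i := x)) j)} = {j \<in> J. r x < r (y j)}"
        using J(2) by auto
      moreover have "y(i := x) \<in> space (PiM (insert i J) (\<lambda>_. N))"
        using that x by (auto simp: space_PiM PiE_iff extensional_def)
      ultimately show ?thesis unfolding E_def C_def using that by (simp add: indicator_def)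
    qed
    then have "(\<integral>\<^sup>+y. indicator E (y(i := x)) \<partial>PiM J (\<lambda>_. N)) = (\<integral>\<^sup>+\<omega>. indicator A x * indicator (C x) \<omega> \<partial>PiM J (\<lambda>_. N))"
      by (intro nn_integral_cong) auto
    also have "\<dots> = indicator A x * emeasure ?P (C x)"
      using C_sets by (rule nn_integral_cmult_indicator)
    finally show "(\<integral>\<^sup>+y. indicator E (y(i := x)) \<partial>PiM J (\<lambda>_. N)) = indicator A x * emeasure ?P (C x)" .
  qed
  also have "\<dots> = (\<integral>\<^sup>+x\<in>A. ennreal (\<Sum>k<K. real (card J choose k) * ?F (r x) ^ (card J - k) * (1 - ?F (r x)) ^ k) \<partial>N)"
    unfolding C_def using emeasure_PiM_fewer_above_level[OF N r J(1)]
    by (intro nn_integral_cong) (simp add: mult_ac)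
  finally show ?thesis unfolding E_def .
qed

(* The k-th summand is the probability that exactly k of the other M - 1 samples have a larger
   reward than a sample whose reward has CDF value p. *)
definition accept_prob :: "nat \<Rightarrow> nat \<Rightarrow> real \<Rightarrow> real" where
  "accept_prob M K p = (\<Sum>k<K. real ((M - 1) choose k) * p ^ (M - k - 1) * (1 - p) ^ k)"

lemma accept_prob_mono:
  assumes "0 \<le> p" "p \<le> 1" "K \<le> K'"
  shows "accept_prob M K p \<le> accept_prob M K' p"
  unfolding accept_prob_def using assms by (intro sum_mono2) auto

lemma accept_prob_nonneg: "0 \<le> p \<Longrightarrow> p \<le> 1 \<Longrightarrow> 0 \<le> accept_prob M K p"
  using accept_prob_mono[of p 0 K M] by (simp add: accept_prob_def)

lemma accept_prob_pos: "0 < p \<Longrightarrow> p \<le> 1 \<Longrightarrow> 1 \<le> K \<Longrightarrow> 0 < accept_prob M K p"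
proof -
  assume "0 < p" "p \<le> 1" "1 \<le> K"
  then have "0 < accept_prob M 1 p" by (simp add: accept_prob_def)
  then show ?thesis using accept_prob_mono[of p 1 K M] \<open>p \<le> 1\<close> \<open>0 < p\<close> \<open>1 \<le> K\<close> by simp
qed

lemma accept_prob_self: "0 < M \<Longrightarrow> accept_prob M M p = 1"
proof -
  assume "0 < M"
  then have "{..<M} = {..M - 1}" by auto
  then have "accept_prob M M p = (\<Sum>k\<le>M - 1. real ((M - 1) choose k) * (1 - p) ^ k * p ^ (M - 1 - k))"
    unfolding accept_prob_def by (intro sum.cong) (auto simp: mult_ac)
  also have "\<dots> = ((1 - p) + p) ^ (M - 1)" by (rule binomial_ring[symmetric])
  finally show ?thesis by simp
qed

lemma accept_prob_le_1: "0 \<le> p \<Longrightarrow> p \<le> 1 \<Longrightarrow> K \<le> M \<Longrightarrow> accept_prob M K p \<le> 1"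
  using accept_prob_mono[of p K M M] accept_prob_self[of M p] by (cases "M = 0") (auto simp: accept_prob_def)

lemma accept_prob_reward_cdf_bounds:
  assumes "prob_space N" "K \<le> M"
  shows "0 \<le> accept_prob M K (reward_cdf N r t)" "accept_prob M K (reward_cdf N r t) \<le> 1"
  using assms by (simp_all add: reward_cdf_def accept_prob_nonneg accept_prob_le_1 prob_space.prob_le_1)

lemma borel_measurable_accept_prob_reward_cdf:
  assumes "finite_measure N" and [measurable]: "r \<in> borel_measurable N"
  shows "(\<lambda>x. accept_prob M K (reward_cdf N r (r x))) \<in> borel_measurable N"
proof -
  have [measurable]: "reward_cdf N r \<in> borel_measurable borel"
    using assms by (rule borel_measurable_reward_cdf)
  show ?thesis unfolding accept_prob_def by measurable
qed

lemma integrable_accept_prob_reward_cdf: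
  assumes "prob_space N" "r \<in> borel_measurable N" "K \<le> M"
  shows "integrable N (\<lambda>x. accept_prob M K (reward_cdf N r (r x)))"
proof -
  interpret prob_space N by fact
  show ?thesis
    using assms accept_prob_reward_cdf_bounds[OF assms(1,3)]
    by (intro integrable_const_bound[where B=1] borel_measurable_accept_prob_reward_cdf) auto
qed

lemma AE_accept_prob_reward_cdf_pos:
  assumes "prob_space N" "r \<in> borel_measurable N" "1 \<le> K"
  shows "AE x in N. 0 < accept_prob M K (reward_cdf N r (r x))"
  using AE_reward_cdf_pos[OF assms(1,2)]
proof eventually_elim
  case (elim x)
  have "reward_cdf N r (r x) \<le> 1"
    using assms(1) by (simp add: reward_cdf_def prob_space.prob_le_1)
  then show ?case using elim assms(3) by (intro accept_prob_pos)
qed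

section \<open>Law of an accepted sample\<close>

lemma accepted_iff_fewer_above:
  assumes "K \<le> M"
  shows "accepted M K X r 0 w \<longleftrightarrow> card {i \<in> {1..<M}. r (X 0 w) < r (X i w)} < K"
proof (cases "M = 0")
  case True
  then show ?thesis using assms by (simp add: accepted_def emp_cdf_def)
next
  case False
  let ?le = "{i \<in> {..<M}. r (X i w) \<le> r (X 0 w)}" and ?gt = "{i \<in> {..<M}. r (X 0 w) < r (X i w)}"
  have "{i \<in> {1..<M}. r (X 0 w) < r (X i w)} = ?gt" by (auto simp: Suc_le_eq intro: gr0I)
  moreover have "card ?le + card ?gt = M"
  proof -
    have "card ?le + card ?gt = card (?le \<union> ?gt)"
      by (intro card_Un_disjoint[symmetric]) auto
    also have "?le \<union> ?gt = {..<M}" by auto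
    finally show ?thesis by simp
  qed
  moreover have "accepted M K X r 0 w \<longleftrightarrow> M - K < card ?le"
  proof -
    have "1 - real K / real M = (real M - real K) / real M" using False by (simp add: field_simps)
    then have "accepted M K X r 0 w \<longleftrightarrow> real M - real K < real (card ?le)"
      using False unfolding accepted_def emp_cdf_def by (simp add: divide_less_cancel)
    also have "real M - real K = real (M - K)" using assms by simp
    finally show ?thesis by simp
  qed
  ultimately show ?thesis using assms by (simp only:) linarith
qed

lemma emeasure_accepted:
  fixes Pr :: "'w measure" and N :: "'a measure" and X :: "nat \<Rightarrow> 'w \<Rightarrow> 'a" and r :: "'a \<Rightarrow> real"
  assumes Pr: "prob_space Pr" and N: "prob_space N" and r[measurable]: "r \<in> borel_measurable N"
    and M: "0 < M" and K: "K \<le> M"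
    and X: "\<forall>i<M. X i \<in> measurable Pr N" and X_distr: "\<forall>i<M. distr Pr N (X i) = N"
    and X_indep: "prob_space.indep_vars Pr (\<lambda>_. N) X {..<M}"
    and A[measurable]: "A \<in> sets N"
  shows "emeasure Pr {w \<in> space Pr. X 0 w \<in> A \<and> accepted M K X r 0 w}
    = (\<integral>\<^sup>+x\<in>A. ennreal (accept_prob M K (reward_cdf N r (r x))) \<partial>N)"
proof -
  let ?J = "{1..<M}"
  let ?Q = "PiM (insert 0 ?J) (\<lambda>_. N)"
  have I: "{..<M} = insert 0 ?J" using M by auto
  define Y where "Y w = (\<lambda>i\<in>insert 0 ?J. X i w)" for w
  have Y[measurable]: "Y \<in> measurable Pr ?Q"
    unfolding Y_def using X M by (intro measurable_restrict) auto
  have Y_distr: "distr Pr ?Q Y = ?Q"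
    unfolding Y_def using M X X_distr X_indep[unfolded I] by (intro distr_iid_eq_PiM[OF Pr]) auto
  define E where "E = {\<omega> \<in> space ?Q. \<omega> 0 \<in> A \<and> card {j \<in> ?J. r (\<omega> 0) < r (\<omega> j)} < K}"
  have [measurable]: "Measurable.pred ?Q (\<lambda>\<omega>. card {j \<in> ?J. r (\<omega> 0) < r (\<omega> j)} < K)"
    by (intro pred_card_less) measurable
  have "E \<in> sets ?Q" unfolding E_def by measurable
  have "Y w 0 = X 0 w" "{j \<in> ?J. r (Y w 0) < r (Y w j)} = {j \<in> ?J. r (X 0 w) < r (X j w)}" for w
    unfolding Y_def by auto
  then have "{w \<in> space Pr. X 0 w \<in> A \<and> accepted M K X r 0 w} = Y -` E \<inter> space Pr"
    using measurable_space[OF Y] unfolding E_def accepted_iff_fewer_above[OF K] by auto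
  then have "emeasure Pr {w \<in> space Pr. X 0 w \<in> A \<and> accepted M K X r 0 w} = emeasure ?Q E"
    using emeasure_distr[OF Y \<open>E \<in> sets ?Q\<close>] Y_distr by simp
  also have "\<dots> = (\<integral>\<^sup>+x\<in>A. ennreal (accept_prob M K (reward_cdf N r (r x))) \<partial>N)"
    unfolding E_def using emeasure_PiM_fewer_above[OF N r _ _ A, of ?J 0 K] M
    by (simp add: accept_prob_def)
  finally show ?thesis .
qed

lemma measure_accepted:
  fixes Pr :: "'w measure" and N :: "'a measure" and X :: "nat \<Rightarrow> 'w \<Rightarrow> 'a" and r :: "'a \<Rightarrow> real"
  assumes "prob_space Pr" and N: "prob_space N" and r: "r \<in> borel_measurable N"
    and "0 < M" and K: "K \<le> M"
    and "\<forall>i<M. X i \<in> measurable Pr N" "\<forall>i<M. distr Pr N (X i) = N"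
    and "prob_space.indep_vars Pr (\<lambda>_. N) X {..<M}"
    and A: "A \<in> sets N"
  shows "measure Pr {w \<in> space Pr. X 0 w \<in> A \<and> accepted M K X r 0 w}
    = (\<integral>x\<in>A. accept_prob M K (reward_cdf N r (r x)) \<partial>N)"
proof -
  interpret Pr: prob_space Pr by fact
  let ?g = "\<lambda>x. accept_prob M K (reward_cdf N r (r x))"
  have g_nonneg: "0 \<le> ?g x" for x by (rule accept_prob_reward_cdf_bounds[OF N K])
  have "(\<integral>\<^sup>+x\<in>A. ennreal (?g x) \<partial>N) = ennreal (\<integral>x\<in>A. ?g x \<partial>N)"
    using g_nonneg integrable_accept_prob_reward_cdf[OF N r K] A
    by (intro nn_set_integral_eq_set_integral) auto
  moreover have "0 \<le> (\<integral>x\<in>A. ?g x \<partial>N)"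
    unfolding set_lebesgue_integral_def using g_nonneg
    by (intro Bochner_Integration.integral_nonneg) (simp add: indicator_def)
  ultimately show ?thesis
    using emeasure_accepted[OF assms] by (simp add: Pr.emeasure_eq_measure)
qed

lemma prob_accepted:
  fixes Pr :: "'w measure" and N :: "'a measure" and X :: "nat \<Rightarrow> 'w \<Rightarrow> 'a" and r :: "'a \<Rightarrow> real"
  assumes "prob_space Pr" and N: "prob_space N" and r: "r \<in> borel_measurable N"
    and "0 < M" and K: "K \<le> M"
    and X: "\<forall>i<M. X i \<in> measurable Pr N" "\<forall>i<M. distr Pr N (X i) = N"
    and "prob_space.indep_vars Pr (\<lambda>_. N) X {..<M}"
  shows "measure Pr {w \<in> space Pr. accepted M K X r 0 w} = (\<integral>x. accept_prob M K (reward_cdf N r (r x)) \<partial>N)"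
proof -
  have "{w \<in> space Pr. accepted M K X r 0 w} = {w \<in> space Pr. X 0 w \<in> space N \<and> accepted M K X r 0 w}"
    using X \<open>0 < M\<close> measurable_space[of "X 0" Pr N] by auto
  then show ?thesis
    using measure_accepted[OF assms sets.top] integrable_accept_prob_reward_cdf[OF N r K]
    by (simp add: set_integral_space)
qed

lemma rhat_eq_ln_accept_prob: "rhat \<alpha> M K F r x = \<alpha> * ln (accept_prob M K (F (r x)))"
  unfolding rhat_def accept_prob_def ..

lemma AE_exp_rhat_eq_accept_prob:
  assumes "prob_space N" "r \<in> borel_measurable N" "\<alpha> > 0" "1 \<le> K"
  shows "AE x in N. exp (rhat \<alpha> M K (reward_cdf N r) r x / \<alpha>) = accept_prob M K (reward_cdf N r (r x))"
  using AE_accept_prob_reward_cdf_pos[OF assms(1,2,4)]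
  by eventually_elim (use assms(3) in \<open>simp add: rhat_eq_ln_accept_prob\<close>)

lemma integrable_exp_rhat:
  assumes "prob_space N" "r \<in> borel_measurable N" "\<alpha> > 0" "1 \<le> K" "K \<le> M"
  shows "integrable N (\<lambda>x. exp (rhat \<alpha> M K (reward_cdf N r) r x / \<alpha>))"
proof -
  have [measurable]: "(\<lambda>x. accept_prob M K (reward_cdf N r (r x))) \<in> borel_measurable N"
    using assms(1,2) by (intro borel_measurable_accept_prob_reward_cdf) (auto intro: prob_space.finite_measure)
  have "AE x in N. accept_prob M K (reward_cdf N r (r x)) = exp (rhat \<alpha> M K (reward_cdf N r) r x / \<alpha>)"
    using AE_exp_rhat_eq_accept_prob[OF assms(1-4), where M=M] by (simp add: eq_commute)
  then show ?thesis
    by (rule integrable_cong_AE_imp[OF integrable_accept_prob_reward_cdf[OF assms(1,2,5)], rotated])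
       (unfold rhat_eq_ln_accept_prob, measurable)
qed

lemma set_integral_exp_rhat:
  assumes "prob_space N" "r \<in> borel_measurable N" "\<alpha> > 0" "1 \<le> K" "K \<le> M" "A \<in> sets N"
  shows "(\<integral>x\<in>A. exp (rhat \<alpha> M K (reward_cdf N r) r x / \<alpha>) \<partial>N)
    = (\<integral>x\<in>A. accept_prob M K (reward_cdf N r (r x)) \<partial>N)"
  using assms(6) AE_exp_rhat_eq_accept_prob[OF assms(1-4), where M=M]
    integrable_exp_rhat[OF assms(1-5)] integrable_accept_prob_reward_cdf[OF assms(1,2,5)]
  by (intro set_lebesgue_integral_cong_AE) (auto elim!: eventually_mono)

theorem mainTheorem2:
  fixes Pr :: "'w measure" and pbar :: "'a measure"
    and X :: "nat \<Rightarrow> 'w \<Rightarrow> 'a" and r :: "'a \<Rightarrow> real"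
    and \<alpha> :: real and M K :: nat
  assumes "prob_space Pr" and "prob_space pbar"
    and "r \<in> borel_measurable pbar"
    and "\<alpha> > 0" and "1 \<le> K" and "K \<le> M"
    and "\<forall>i<M. X i \<in> measurable Pr pbar"
    and "\<forall>i<M. distr Pr pbar (X i) = pbar"
    and "prob_space.indep_vars Pr (\<lambda>_. pbar) X {..<M}"
    and "\<forall>t. measure pbar {x \<in> space pbar. r x = t} = 0"
  shows "measure Pr {w \<in> space Pr. accepted M K X r 0 w} > 0
    \<and> integrable pbar (\<lambda>x. exp (rhat \<alpha> M K (reward_cdf pbar r) r x / \<alpha>))
    \<and> (\<integral>x. exp (rhat \<alpha> M K (reward_cdf pbar r) r x / \<alpha>) \<partial>pbar) > 0
    \<and> (\<forall>A \<in> sets pbar.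
         measure Pr {w \<in> space Pr. X 0 w \<in> A \<and> accepted M K X r 0 w}
           / measure Pr {w \<in> space Pr. accepted M K X r 0 w}
         = (\<integral>x\<in>A. exp (rhat \<alpha> M K (reward_cdf pbar r) r x / \<alpha>) \<partial>pbar)
           / (\<integral>x. exp (rhat \<alpha> M K (reward_cdf pbar r) r x / \<alpha>) \<partial>pbar))
    \<and> (M = 2 \<and> K = 1 \<longrightarrow>
         (\<forall>x. rhat \<alpha> M K (reward_cdf pbar r) r x / \<alpha> = ln (reward_cdf pbar r (r x))))
    \<and> (K = M \<longrightarrow> (\<forall>x. rhat \<alpha> M K (reward_cdf pbar r) r x = 0))"
proof -
  note N = \<open>prob_space pbar\<close> and r = \<open>r \<in> borel_measurable pbar\<close>
    and K = \<open>1 \<le> K\<close> \<open>K \<le> M\<close>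
  have M: "0 < M" using K by simp
  let ?g = "\<lambda>x. accept_prob M K (reward_cdf pbar r (r x))"
  let ?e = "\<lambda>x. exp (rhat \<alpha> M K (reward_cdf pbar r) r x / \<alpha>)"
  have g_int: "integrable pbar ?g" using N r K(2) by (rule integrable_accept_prob_reward_cdf)
  have e_int: "integrable pbar ?e" using N r \<open>\<alpha> > 0\<close> K by (rule integrable_exp_rhat)
  have e_set: "\<forall>A \<in> sets pbar. (\<integral>x\<in>A. ?e x \<partial>pbar) = (\<integral>x\<in>A. ?g x \<partial>pbar)"
    using assms by (intro ballI set_integral_exp_rhat) auto
  then have "(\<integral>x. ?e x \<partial>pbar) = (\<integral>x. ?g x \<partial>pbar)"
    using g_int e_int by (simp add: set_integral_space[symmetric])
  moreover have "0 < (\<integral>x. ?g x \<partial>pbar)"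
    using N g_int AE_accept_prob_reward_cdf_pos[OF N r K(1)] by (rule prob_space.integral_pos_AE)
  moreover have "\<forall>A \<in> sets pbar. measure Pr {w \<in> space Pr. X 0 w \<in> A \<and> accepted M K X r 0 w}
      = (\<integral>x\<in>A. ?g x \<partial>pbar)"
    using assms M by (intro ballI measure_accepted) auto
  ultimately show ?thesis
    using prob_accepted[OF assms(1-3) M K(2) assms(7-9)] e_int e_set
  proof (intro conjI impI allI)
    fix x
    show "M = 2 \<and> K = 1 \<Longrightarrow> rhat \<alpha> M K (reward_cdf pbar r) r x / \<alpha> = ln (reward_cdf pbar r (r x))"
      using \<open>\<alpha> > 0\<close> by (simp add: rhat_eq_ln_accept_prob accept_prob_def)
    show "K = M \<Longrightarrow> rhat \<alpha> M K (reward_cdf pbar r) r x = 0"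
      using M by (simp add: rhat_eq_ln_accept_prob accept_prob_self)
  qed auto
qed

end
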